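(* Let $d\ge1$, let $\{e^j\}_{j=1}^d$ be the standard basis of $\mathbb{R}^d$, let $\|\cdot\|_2$ be the Euclidean norm, $B_2=\{x\in\mathbb{R}^d:\|x\|_2\le1\}$, and $B^o_2(x,r)=\{y:\|y-x\|_2<r\}$. Define $a:=\frac{2}{5d+1}$, $x^j:=ae^j$ for $j=1,\dots,d$, and $x^{d+1}:=-a\sum_{j=1}^de^j$. Then for every $r>(1-a^2)^{1/2}$, $$B_2\subset\bigcup_{j=1}^{d+1}B^o_2(x^j,r).$$ *)

theory Defs
  imports "HOL-Analysis.Analysis"
begin

end

theory Submission
  imports Defs
begin

text \<open>
  Suppose x lies in the unit ball and has squared distance greater than 1 - a^2 from every
  vertex. With t = |x|^2 and S = sum_i x_i these conditions read x_j < m := (t + 2a^2 - 1) / (2a)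
  for every j, and -2aS < t + a^2 (d + 1) - 1. If m <= 0, all coordinates are negative, so
  t <= S^2, which is too small to satisfy both bounds. If m > 0, the slacks u_j = m - x_j are
  positive, and sum_j u_j^2 <= (sum_j u_j)^2 gives t <= d m^2 + (d m - S)^2, again too small.
  In both cases 4 < a^2 (9d^2 + 10d + 9), which is false for a = 2 / (5d + 1).
\<close>

lemma sum_power2_le_power2_sum:
  fixes f :: "'i \<Rightarrow> real"
  assumes "\<And>i. i \<in> A \<Longrightarrow> 0 \<le> f i"
  shows "(\<Sum>i\<in>A. (f i)\<^sup>2) \<le> (sum f A)\<^sup>2"
proof -
  have "sqrt (\<Sum>i\<in>A. (f i)\<^sup>2) \<le> sum f A"
    using L2_set_le_sum[of A f] assms unfolding L2_set_def by blast
  then have "(sqrt (\<Sum>i\<in>A. (f i)\<^sup>2))\<^sup>2 \<le> (sum f A)\<^sup>2"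
    by (rule power_mono) (simp add: sum_nonneg)
  then show ?thesis by (simp add: sum_nonneg)
qed

lemma far_from_vertices_bound_small_norm:
  fixes I :: "'i set" and x :: "'i \<Rightarrow> real" and a :: real
  defines "t \<equiv> \<Sum>i\<in>I. (x i)\<^sup>2" and "S \<equiv> \<Sum>i\<in>I. x i" and "d \<equiv> real (card I)"
  assumes "finite I" "I \<noteq> {}" "a > 0"
    and neg: "\<And>i. i \<in> I \<Longrightarrow> x i < 0" and small: "t \<le> 1 - 2 * a\<^sup>2"
    and far_diag: "1 - a\<^sup>2 < t + 2 * a * S + a\<^sup>2 * d"
  shows "4 < a\<^sup>2 * (d\<^sup>2 + 2 * d + 5)"
proof -
  have "t \<le> (\<Sum>i\<in>I. - x i)\<^sup>2"
    unfolding t_def using sum_power2_le_power2_sum[of I "\<lambda>i. - x i"] neg by fastforce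
  also have "\<dots> = S\<^sup>2" by (simp add: S_def sum_negf)
  finally have t_le: "t \<le> S\<^sup>2" .
  have "0 < (\<Sum>i\<in>I. - x i)" using neg assms(4,5) by (intro sum_pos) auto
  then have "S < 0" by (simp add: S_def sum_negf)
  then have "2 * a * S < 0" using \<open>a > 0\<close> by (simp add: mult_pos_neg)
  moreover have "a\<^sup>2 * (d + 1) = a\<^sup>2 * d + a\<^sup>2" by (simp add: distrib_left)
  ultimately have lower: "1 - a\<^sup>2 * (d + 1) < t" using far_diag by linarith
  have "a * (- 2 * S) < a * (a * (d - 1))"
    using far_diag small by (simp add: power2_eq_square algebra_simps)
  then have "- 2 * S < a * (d - 1)" using \<open>a > 0\<close> mult_less_cancel_left_pos by blast
  then have "- S < a * (d - 1) / 2" by simp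
  then have "(- S)\<^sup>2 < (a * (d - 1) / 2)\<^sup>2" using \<open>S < 0\<close>
    by (intro power_strict_mono) auto
  then have "S\<^sup>2 < (a * (d - 1) / 2)\<^sup>2" by simp
  with t_le lower have "1 - a\<^sup>2 * (d + 1) < (a * (d - 1) / 2)\<^sup>2" by linarith
  then show ?thesis by (simp add: power2_eq_square algebra_simps)
qed

lemma far_from_vertices_bound_large_norm:
  fixes I :: "'i set" and x :: "'i \<Rightarrow> real" and a :: real
  defines "t \<equiv> \<Sum>i\<in>I. (x i)\<^sup>2" and "S \<equiv> \<Sum>i\<in>I. x i" and "d \<equiv> real (card I)"
  assumes "finite I" "I \<noteq> {}" "a > 0" "t \<le> 1" and large: "1 - 2 * a\<^sup>2 < t"
    and far_axis: "\<And>j. j \<in> I \<Longrightarrow> 1 - a\<^sup>2 < t - 2 * a * x j + a\<^sup>2"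
    and far_diag: "1 - a\<^sup>2 < t + 2 * a * S + a\<^sup>2 * d"
  shows "4 < a\<^sup>2 * (9 * d\<^sup>2 + 10 * d + 9)"
proof -
  define m where "m = (t + 2 * a\<^sup>2 - 1) / (2 * a)"
  have "0 < m" using large \<open>a > 0\<close> by (simp add: m_def)
  have "m \<le> a" using \<open>t \<le> 1\<close> \<open>a > 0\<close> by (simp add: m_def field_simps power2_eq_square)
  define u where "u i = m - x i" for i
  define U where "U = sum u I"
  have u_pos: "0 < u i" if "i \<in> I" for i
    using far_axis[OF that] \<open>a > 0\<close> by (simp add: u_def m_def field_simps)
  have "0 < U" unfolding U_def using u_pos assms(4,5) by (intro sum_pos) auto
  have "t = (\<Sum>i\<in>I. m\<^sup>2 - 2 * m * u i + (u i)\<^sup>2)"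
    unfolding t_def u_def by (simp add: power2_eq_square algebra_simps)
  also have "\<dots> = d * m\<^sup>2 - 2 * m * U + (\<Sum>i\<in>I. (u i)\<^sup>2)"
    by (simp add: sum.distrib sum_subtractf sum_distrib_left U_def d_def)
  also have "\<dots> \<le> d * m\<^sup>2 + U\<^sup>2"
  proof -
    have "(\<Sum>i\<in>I. (u i)\<^sup>2) \<le> U\<^sup>2"
      unfolding U_def by (rule sum_power2_le_power2_sum) (simp add: u_pos less_imp_le)
    moreover have "0 < m * U" using \<open>0 < m\<close> \<open>0 < U\<close> by simp
    ultimately show ?thesis by linarith
  qed
  finally have t_le: "t \<le> d * m\<^sup>2 + U\<^sup>2" .
  have "a * (- 2 * S) < a * (a * (d + 1))"
    using far_diag \<open>t \<le> 1\<close> by (simp add: power2_eq_square algebra_simps)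
  then have "- 2 * S < a * (d + 1)" using \<open>a > 0\<close> mult_less_cancel_left_pos by blast
  then have "- S < a * (d + 1) / 2" by simp
  moreover have "U = d * m - S" by (simp add: U_def u_def S_def d_def sum_subtractf)
  moreover have "d * m \<le> d * a" using \<open>m \<le> a\<close> by (simp add: d_def mult_left_mono)
  ultimately have "U < a * (3 * d + 1) / 2" by (simp add: algebra_simps)
  then have "U\<^sup>2 < (a * (3 * d + 1) / 2)\<^sup>2" using \<open>0 < U\<close> by (simp add: power_strict_mono)
  moreover have "d * m\<^sup>2 \<le> d * a\<^sup>2" using \<open>0 < m\<close> \<open>m \<le> a\<close> by (simp add: d_def mult_left_mono power_mono)
  ultimately have "1 - 2 * a\<^sup>2 < d * a\<^sup>2 + (a * (3 * d + 1) / 2)\<^sup>2" using t_le large by linarith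
  then show ?thesis by (simp add: power2_eq_square field_simps)
qed

lemma far_from_vertices_bound:
  fixes I :: "'i set" and x :: "'i \<Rightarrow> real" and a :: real
  defines "t \<equiv> \<Sum>i\<in>I. (x i)\<^sup>2" and "S \<equiv> \<Sum>i\<in>I. x i" and "d \<equiv> real (card I)"
  assumes "finite I" "I \<noteq> {}" "a > 0" "t \<le> 1"
    and far_axis: "\<And>j. j \<in> I \<Longrightarrow> 1 - a\<^sup>2 < t - 2 * a * x j + a\<^sup>2"
    and far_diag: "1 - a\<^sup>2 < t + 2 * a * S + a\<^sup>2 * d"
  shows "4 < a\<^sup>2 * (9 * d\<^sup>2 + 10 * d + 9)"
proof (cases "t \<le> 1 - 2 * a\<^sup>2")
  case True
  have neg: "x i < 0" if "i \<in> I" for i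
  proof -
    have "2 * a * x i < 0" using far_axis[OF that] True by linarith
    then show ?thesis using \<open>a > 0\<close> by (simp add: mult_less_0_iff)
  qed
  have "4 < a\<^sup>2 * (d\<^sup>2 + 2 * d + 5)"
    by (rule far_from_vertices_bound_small_norm[of I a x, folded t_def S_def d_def])
      (use assms neg True in auto)
  also have "\<dots> \<le> a\<^sup>2 * (9 * d\<^sup>2 + 10 * d + 9)"
    by (intro mult_left_mono) (simp_all add: d_def power2_eq_square algebra_simps)
  finally show ?thesis .
next
  case False
  then show ?thesis
    by (intro far_from_vertices_bound_large_norm[of I a x, folded t_def S_def d_def])
      (use assms in auto)
qed

lemma power2_dist_eq_inner:
  "(dist y x)\<^sup>2 = (norm x)\<^sup>2 - 2 * inner x y + (norm y)\<^sup>2"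
  unfolding dot_norm_neg dist_norm by (simp add: norm_minus_commute field_simps)

lemma power2_norm_vec: "(norm (x :: real ^ 'n))\<^sup>2 = (\<Sum>i\<in>UNIV. (x $ i)\<^sup>2)"
  by (simp only: power2_norm_eq_inner) (simp add: inner_vec_def power2_eq_square)

lemma power2_dist_scaleR_axis:
  fixes x :: "real ^ 'n"
  shows "(dist (a *\<^sub>R axis j 1) x)\<^sup>2 = (norm x)\<^sup>2 - 2 * a * x $ j + a\<^sup>2"
  by (simp add: power2_dist_eq_inner inner_axis power_mult_distrib)

lemma power2_dist_scaleR_sum_axis:
  fixes x :: "real ^ 'n"
  shows "(dist (a *\<^sub>R (\<Sum>j\<in>UNIV. axis j 1)) x)\<^sup>2
           = (norm x)\<^sup>2 - 2 * a * (\<Sum>i\<in>UNIV. x $ i) + a\<^sup>2 * CARD('n)"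
proof -
  have "inner x (\<Sum>j\<in>UNIV. axis j 1) = (\<Sum>i\<in>UNIV. x $ i)"
    by (simp add: inner_sum_right inner_axis)
  moreover have "(norm (\<Sum>j\<in>UNIV. axis j 1 :: real ^ 'n))\<^sup>2 = CARD('n)"
    by (simp add: power2_norm_vec axis_def)
  ultimately show ?thesis
    by (simp add: power2_dist_eq_inner power_mult_distrib)
qed

lemma far_from_vertices_bound_vec:
  fixes x :: "real ^ 'n" and a :: real
  assumes "norm x \<le> 1" "0 < a"
    and far_axis: "\<And>j. 1 - a\<^sup>2 < (dist (a *\<^sub>R axis j 1) x)\<^sup>2"
    and far_diag: "1 - a\<^sup>2 < (dist (- a *\<^sub>R (\<Sum>j\<in>UNIV. axis j 1)) x)\<^sup>2"
  shows "4 < a\<^sup>2 * (9 * (real CARD('n))\<^sup>2 + 10 * real CARD('n) + 9)"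
proof -
  have "(\<Sum>i\<in>UNIV. (x $ i)\<^sup>2) \<le> 1"
    using \<open>norm x \<le> 1\<close> by (simp add: power2_norm_vec[symmetric] power_le_one)
  moreover note far_axis[unfolded power2_dist_scaleR_axis power2_norm_vec]
  moreover note far_diag[unfolded power2_dist_scaleR_sum_axis power2_norm_vec]
  ultimately show ?thesis
    using far_from_vertices_bound[of UNIV a "\<lambda>i. x $ i"] \<open>0 < a\<close> by simp
qed

lemma vertex_scale_bound:
  assumes "1 \<le> d"
  shows "(2 / (5 * d + 1))\<^sup>2 * (9 * d\<^sup>2 + 10 * d + 9) \<le> (4 :: real)"
proof -
  have "1 \<le> d * d" using assms mult_mono[of 1 d 1 d] by simp
  then have "9 * d\<^sup>2 + 10 * d + 9 \<le> (5 * d + 1)\<^sup>2"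
    by (simp add: power2_eq_square algebra_simps)
  then show ?thesis
    using assms by (simp add: power_divide field_simps)
qed

theorem proposition3p2:
  fixes r :: real
  defines "d \<equiv> CARD('n::finite)"
  defines "a \<equiv> 2 / (5 * real d + 1)"
  assumes "r > sqrt (1 - a\<^sup>2)"
  shows "cball (0 :: real ^ 'n) 1 \<subseteq>
           (\<Union>j\<in>UNIV. ball (a *\<^sub>R axis j 1) r)
           \<union> ball (- a *\<^sub>R (\<Sum>j\<in>UNIV. axis j 1)) r"
proof
  fix x :: "real ^ 'n"
  assume x: "x \<in> cball 0 1"
  have "1 \<le> real d" by (simp add: d_def Suc_le_eq)
  then have "0 < a" "a\<^sup>2 \<le> 1" by (simp_all add: a_def power_le_one)
  have far: "1 - a\<^sup>2 < (dist y x)\<^sup>2" if "\<not> dist y x < r" for y :: "real ^ 'n"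
  proof -
    have "(sqrt (1 - a\<^sup>2))\<^sup>2 < (dist y x)\<^sup>2"
      using assms(3) that \<open>a\<^sup>2 \<le> 1\<close> by (intro power_strict_mono) auto
    then show ?thesis using \<open>a\<^sup>2 \<le> 1\<close> by simp
  qed
  show "x \<in> (\<Union>j\<in>UNIV. ball (a *\<^sub>R axis j 1) r) \<union> ball (- a *\<^sub>R (\<Sum>j\<in>UNIV. axis j 1)) r"
  proof (rule ccontr)
    assume "\<not> ?thesis"
    then have "4 < a\<^sup>2 * (9 * (real d)\<^sup>2 + 10 * real d + 9)"
      using x \<open>0 < a\<close> by (intro far_from_vertices_bound_vec[of x a, folded d_def] far) auto
    with vertex_scale_bound[OF \<open>1 \<le> real d\<close>] show False by (simp add: a_def)
  qed
qed

end
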